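(* Let $\mathcal{C},\mathcal{D}$ be simplicial models with facets $F$ of $\mathcal{C}$ and $G$ of $\mathcal{D}$, and let $\mathcal{M},\mathcal{N}$ be local epistemic models with worlds $w$ of $\mathcal{M}$ and $v$ of $\mathcal{N}$. Then $\mathcal{C},F$ and $\mathcal{D},G$ are bisimilar iff $\mathtt{LEM}(\mathcal{C}),F$ and $\mathtt{LEM}(\mathcal{D}),G$ are bisimilar; and $\mathcal{M},w$ and $\mathcal{N},v$ are bisimilar iff $\mathtt{SC}(\mathcal{M}),F^{\mathcal M}_w$ and $\mathtt{SC}(\mathcal{N}),F^{\mathcal N}_v$ are bisimilar.
   Context: Fix a nonempty finite set $\mathbf{A}$ of agents and a countable set $\mathbf{P}$ of predicate letters. A simplicial model is $\mathcal{C}=(\mathcal{V},C,\chi,\ell)$: $\mathcal{V}\neq\emptyset$; $C\subseteq\wp(\mathcal{V})$ with $\emptyset\notin C$, closed under nonempty subsets, containing all singletons; $\chi:\mathcal{V}\to\mathbf{A}$ injective on every member of $C$; $\ell:\mathbf{P}\to\wp(\mathcal{V})$; facets $\mathcal{F}(C)$ are the inclusion-maximal members of $C$. A first-order Kripke model is $\mathcal{M}=(W,\delta,\{R_a\}_{a\in\mathbf{A}},\rho)$: $W\neq\emptyset$, $\delta:W\to\wp(\mathbf{A})\setminus\{\emptyset\}$, $R_a\subseteq W\times W$ with $R_a(w)=\emptyset$ if $a\notin\delta(w)$, $\rho:\mathbf{P}\times W\to\wp(\mathbf{A})$ with $\rho(p,w)\subseteq\delta(w)$. $\mathcal{M}$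 is a local epistemic model if: for each $a$ the restriction of $R_a$ to $\{w\mid a\in\delta(w)\}$ is an equivalence relation; $wR_av$ and $a\in\delta(w)$ imply $a\in\delta(v)$; $wR_av$ and $a\in\rho(p,w)$ imply $a\in\rho(p,v)$; $v\in\bigcap_{a\in\delta(w)}R_a(w)$ implies $\delta(v)\subseteq\delta(w)$. $\mathtt{LEM}(\mathcal{C})$ has worlds $\mathcal{F}(C)$, $\delta(F)=\chi[F]$, $R_a=\{(F,G)\mid a\in\chi[F\cap G]\}$, $\rho(p,F)=\chi[F\cap\ell(p)]$. For a local epistemic model $\mathcal{M}$, let $[w]_a=R_a(w)$ and $F^{\mathcal M}_w=\{(a,[w]_a)\mid a\in\delta(w)\}$; $\mathtt{SC}(\mathcal{M})$ has vertices $\{(a,[w]_a)\mid w\in W,a\in\delta(w)\}$, faces the nonempty subsets of the sets $F^{\mathcal M}_w$ ($w\in W$), coloring $(a,[w]_a)\mapsto a$, labeling $\ell(p)=\{(a,[w]_a)\mid a\in\rho(p,w)\}$. Bisimulation between simplicial models $\mathcal{C},\mathcal{D}$: $Z\subseteq\mathcal{F}(C^{\mathcal C})\times\mathcal{F}(C^{\mathcal D})$ such that for $(F,G)\in Z$: (Inv) $\chi^{\mathcal C}[F]=\chi^{\mathcal D}[G]$ and $\chi^{\mathcal C}[F\cap\ell^{\mathcal C}(p)]=\chi^{\mathcal D}[G\cap\ell^{\mathcal D}(p)]$ for all $p$; (Zig) for all $A\subseteq\mathbf{A}$ and facets $F'$ with $A\subseteq\chi^{\mathcal C}[F\cap F']$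 there is a facet $G'$ with $A\subseteq\chi^{\mathcal D}[G\cap G']$ and $(F',G')\in Z$; (Zag) symmetric. Bisimulation between Kripke models $\mathcal{M},\mathcal{N}$: $Z\subseteq W^{\mathcal M}\times W^{\mathcal N}$ such that for $(w,v)\in Z$: (Inv) $\delta^{\mathcal M}(w)=\delta^{\mathcal N}(v)$ and $\rho^{\mathcal M}(p,w)=\rho^{\mathcal N}(p,v)$ for all $p$; (Zig) for all $A\subseteq\mathbf{A}$ and $w'\in\bigcap_{a\in A}R^{\mathcal M}_a(w)$ there is $v'\in\bigcap_{a\in A}R^{\mathcal N}_a(v)$ with $(w',v')\in Z$; (Zag) symmetric (the empty intersection is the whole set of worlds). Pointed models are bisimilar if some bisimulation relates the points. *)

theory Defs
  imports Main "HOL-Library.Countable"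
begin

text \<open>Agents are the elements of a finite type 'a (nonempty automatically);
predicate letters form a countable type 'p.\<close>

record ('v, 'a, 'p) smodel =
  verts :: "'v set"
  faces :: "'v set set"
  col   :: "'v \<Rightarrow> 'a"
  lab   :: "'p \<Rightarrow> 'v set"

definition simplicial_model :: "('v, 'a, 'p) smodel \<Rightarrow> bool" where
  "simplicial_model C \<longleftrightarrow>
     verts C \<noteq> {} \<and>
     faces C \<subseteq> Pow (verts C) \<and>
     {} \<notin> faces C \<and>
     (\<forall>X\<in>faces C. \<forall>Y. Y \<subseteq> X \<and> Y \<noteq> {} \<longrightarrow> Y \<in> faces C) \<and>
     (\<forall>x\<in>verts C. {x} \<in> faces C) \<and>
     (\<forall>X\<in>faces C. inj_on (col C) X) \<and>
     (\<forall>p. lab C p \<subseteq> verts C)"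

definition facets :: "('v, 'a, 'p) smodel \<Rightarrow> 'v set set" where
  "facets C = {X \<in> faces C. \<forall>Y\<in>faces C. X \<subseteq> Y \<longrightarrow> Y = X}"

record ('w, 'a, 'p) kmodel =
  worlds :: "'w set"
  dom    :: "'w \<Rightarrow> 'a set"
  rel    :: "'a \<Rightarrow> 'w \<Rightarrow> 'w set"
  val    :: "'p \<Rightarrow> 'w \<Rightarrow> 'a set"

definition kripke_model :: "('w, 'a, 'p) kmodel \<Rightarrow> bool" where
  "kripke_model M \<longleftrightarrow>
     worlds M \<noteq> {} \<and>
     (\<forall>w\<in>worlds M. dom M w \<noteq> {}) \<and>
     (\<forall>a w. rel M a w \<subseteq> worlds M \<and> (w \<notin> worlds M \<longrightarrow> rel M a w = {})) \<and>
     (\<forall>a. \<forall>w\<in>worlds M. a \<notin> dom M w \<longrightarrow> rel M a w = {}) \<and>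
     (\<forall>p. \<forall>w\<in>worlds M. val M p w \<subseteq> dom M w)"

definition local_epistemic :: "('w, 'a, 'p) kmodel \<Rightarrow> bool" where
  "local_epistemic M \<longleftrightarrow>
     kripke_model M \<and>
     (\<forall>a. let D = {w \<in> worlds M. a \<in> dom M w} in
            equiv D ({(w, v). v \<in> rel M a w} \<inter> (D \<times> D))) \<and>
     (\<forall>a w v. v \<in> rel M a w \<and> a \<in> dom M w \<longrightarrow> a \<in> dom M v) \<and>
     (\<forall>a p w v. v \<in> rel M a w \<and> a \<in> val M p w \<longrightarrow> a \<in> val M p v) \<and>
     (\<forall>w\<in>worlds M. \<forall>v\<in>worlds M. (\<forall>a\<in>dom M w. v \<in> rel M a w) \<longrightarrow> dom M v \<subseteq> dom M w)"

definition LEM :: "('v, 'a, 'p) smodel \<Rightarrow> ('v set, 'a, 'p) kmodel" where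
  "LEM C = \<lparr> worlds = facets C,
             dom = (\<lambda>F. col C ` F),
             rel = (\<lambda>a F. {G. F \<in> facets C \<and> G \<in> facets C \<and> a \<in> col C ` (F \<inter> G)}),
             val = (\<lambda>p F. col C ` (F \<inter> lab C p)) \<rparr>"

definition Fw :: "('w, 'a, 'p) kmodel \<Rightarrow> 'w \<Rightarrow> ('a \<times> 'w set) set" where
  "Fw M w = {(a, rel M a w) | a. a \<in> dom M w}"

definition SC :: "('w, 'a, 'p) kmodel \<Rightarrow> ('a \<times> 'w set, 'a, 'p) smodel" where
  "SC M = \<lparr> verts = {(a, rel M a w) | a w. w \<in> worlds M \<and> a \<in> dom M w},
            faces = {X. X \<noteq> {} \<and> (\<exists>w\<in>worlds M. X \<subseteq> Fw M w)},
            col = fst,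
            lab = (\<lambda>p. {(a, rel M a w) | a w. w \<in> worlds M \<and> a \<in> val M p w}) \<rparr>"

definition sbisim :: "('v, 'a, 'p) smodel \<Rightarrow> ('u, 'a, 'p) smodel \<Rightarrow> ('v set \<times> 'u set) set \<Rightarrow> bool" where
  "sbisim C D Z \<longleftrightarrow>
     Z \<subseteq> facets C \<times> facets D \<and>
     (\<forall>(F, G)\<in>Z.
        col C ` F = col D ` G \<and>
        (\<forall>p. col C ` (F \<inter> lab C p) = col D ` (G \<inter> lab D p)) \<and>
        (\<forall>A F'. F' \<in> facets C \<and> A \<subseteq> col C ` (F \<inter> F') \<longrightarrow>
           (\<exists>G'\<in>facets D. A \<subseteq> col D ` (G \<inter> G') \<and> (F', G') \<in> Z)) \<and>
        (\<forall>A G'. G' \<in> facets D \<and> A \<subseteq> col D ` (G \<inter> G') \<longrightarrow>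
           (\<exists>F'\<in>facets C. A \<subseteq> col C ` (F \<inter> F') \<and> (F', G') \<in> Z)))"

definition sbisimilar :: "('v, 'a, 'p) smodel \<Rightarrow> 'v set \<Rightarrow> ('u, 'a, 'p) smodel \<Rightarrow> 'u set \<Rightarrow> bool" where
  "sbisimilar C F D G \<longleftrightarrow> (\<exists>Z. sbisim C D Z \<and> (F, G) \<in> Z)"

definition succs :: "('w, 'a, 'p) kmodel \<Rightarrow> 'a set \<Rightarrow> 'w \<Rightarrow> 'w set" where
  "succs M A w = {w' \<in> worlds M. \<forall>a\<in>A. w' \<in> rel M a w}"

definition kbisim :: "('w, 'a, 'p) kmodel \<Rightarrow> ('x, 'a, 'p) kmodel \<Rightarrow> ('w \<times> 'x) set \<Rightarrow> bool" where
  "kbisim M N Z \<longleftrightarrow>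
     Z \<subseteq> worlds M \<times> worlds N \<and>
     (\<forall>(w, v)\<in>Z.
        dom M w = dom N v \<and>
        (\<forall>p. val M p w = val N p v) \<and>
        (\<forall>A. \<forall>w'\<in>succs M A w. \<exists>v'\<in>succs N A v. (w', v') \<in> Z) \<and>
        (\<forall>A. \<forall>v'\<in>succs N A v. \<exists>w'\<in>succs M A w. (w', v') \<in> Z))"

definition kbisimilar :: "('w, 'a, 'p) kmodel \<Rightarrow> 'w \<Rightarrow> ('x, 'a, 'p) kmodel \<Rightarrow> 'x \<Rightarrow> bool" where
  "kbisimilar M w N v \<longleftrightarrow> (\<exists>Z. kbisim M N Z \<and> (w, v) \<in> Z)"

end

theory Submission
  imports Defs
begin

(* Both equivalences are instances of one transfer principle. Call f a facet representation
   of a Kripke model M by a simplicial model S if f sends each world w to a facet with the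
   agents dom M w and the valuation of w, and sends the worlds reachable from w along all
   R_a, a \<in> A, exactly onto the facets sharing with f w a vertex of every colour in A.
   Then images of Kripke bisimulations under f \<times> g are simplicial bisimulations, and
   preimages of simplicial bisimulations are Kripke bisimulations.
   The identity represents LEM C by C. For a local epistemic model M, w \<mapsto> F_w represents
   M by SC M: since the R_a are equivalence relations on the worlds where a is present,
   F_w and F_u share the vertex of colour a iff u R_a w, and the last locality condition
   makes every F_w maximal, so the facets of SC M are exactly the F_w. *)

lemma kripke_model_rel:
  assumes "kripke_model M" "u \<in> rel M a w"
  shows "w \<in> worlds M" "u \<in> worlds M" "a \<in> dom M w"
  using assms unfolding kripke_model_def by blast+

lemma local_epistemic_kripke_model: "local_epistemic M \<Longrightarrow> kripke_model M"
  unfolding local_epistemic_def by (rule conjunct1)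

lemma local_epistemic_rel_equiv:
  fixes M :: "('w, 'a, 'p) kmodel" and a :: 'a
  assumes "local_epistemic M"
  defines "D \<equiv> {w \<in> worlds M. a \<in> dom M w}"
  shows "equiv D ({(w, v). v \<in> rel M a w} \<inter> D \<times> D)"
  using assms unfolding local_epistemic_def Let_def by blast

lemma local_epistemic_rel_refl:
  assumes "local_epistemic M" "w \<in> worlds M" "a \<in> dom M w"
  shows "w \<in> rel M a w"
  using local_epistemic_rel_equiv[OF assms(1), of a] assms(2,3)
  unfolding equiv_def refl_on_def by blast

lemma local_epistemic_dom_rel:
  assumes "local_epistemic M" "u \<in> rel M a w"
  shows "a \<in> dom M u"
proof -
  have "a \<in> dom M w"
    using kripke_model_rel(3)[OF local_epistemic_kripke_model[OF assms(1)] assms(2)] .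
  then show ?thesis using assms unfolding local_epistemic_def by blast
qed

lemma local_epistemic_val_rel:
  assumes "local_epistemic M" "u \<in> rel M a w" "a \<in> val M p w"
  shows "a \<in> val M p u"
  using assms unfolding local_epistemic_def by blast

lemma local_epistemic_dom_subset:
  assumes "local_epistemic M" "w \<in> worlds M" "u \<in> worlds M" "\<forall>a\<in>dom M w. u \<in> rel M a w"
  shows "dom M u \<subseteq> dom M w"
  using assms unfolding local_epistemic_def by blast

lemma local_epistemic_rel_class:
  assumes "local_epistemic M" "u \<in> rel M a w"
  shows "rel M a u = rel M a w"
proof -
  define D where "D = {w \<in> worlds M. a \<in> dom M w}"
  define R where "R = {(w, v). v \<in> rel M a w} \<inter> D \<times> D"
  have "sym R" "trans R"
    using local_epistemic_rel_equiv[OF assms(1), of a] unfolding equiv_def D_def R_def by simp_all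
  have in_R: "(x, y) \<in> R" if "y \<in> rel M a x" for x y
    using that kripke_model_rel[OF local_epistemic_kripke_model[OF assms(1)]]
      local_epistemic_dom_rel[OF assms(1)] unfolding R_def D_def by blast
  have "(w, u) \<in> R" "(u, w) \<in> R"
    using in_R assms(2) \<open>sym R\<close> by (blast dest: symD)+
  then show ?thesis
    using in_R \<open>trans R\<close> unfolding R_def by (blast dest: transD)
qed

definition adjacent_facets :: "('v, 'a, 'p) smodel \<Rightarrow> 'a set \<Rightarrow> 'v set \<Rightarrow> 'v set set" where
  "adjacent_facets C A F = {F' \<in> facets C. A \<subseteq> col C ` (F \<inter> F')}"

lemma sbisim_iff_adjacent_facets:
  "sbisim C D Z \<longleftrightarrow>
     Z \<subseteq> facets C \<times> facets D \<and>
     (\<forall>F G. (F, G) \<in> Z \<longrightarrow>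
        col C ` F = col D ` G \<and>
        (\<forall>p. col C ` (F \<inter> lab C p) = col D ` (G \<inter> lab D p)) \<and>
        (\<forall>A. \<forall>F'\<in>adjacent_facets C A F. \<exists>G'\<in>adjacent_facets D A G. (F', G') \<in> Z) \<and>
        (\<forall>A. \<forall>G'\<in>adjacent_facets D A G. \<exists>F'\<in>adjacent_facets C A F. (F', G') \<in> Z))"
  by (simp only: sbisim_def adjacent_facets_def Ball_def Bex_def mem_Collect_eq
      split_paired_All case_prod_conv conj_assoc)

lemma sbisimI:
  assumes "Z \<subseteq> facets C \<times> facets D"
    and "\<And>F G. (F, G) \<in> Z \<Longrightarrow> col C ` F = col D ` G"
    and "\<And>F G p. (F, G) \<in> Z \<Longrightarrow> col C ` (F \<inter> lab C p) = col D ` (G \<inter> lab D p)"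
    and "\<And>F G A F'. (F, G) \<in> Z \<Longrightarrow> F' \<in> adjacent_facets C A F \<Longrightarrow>
           \<exists>G'\<in>adjacent_facets D A G. (F', G') \<in> Z"
    and "\<And>F G A G'. (F, G) \<in> Z \<Longrightarrow> G' \<in> adjacent_facets D A G \<Longrightarrow>
           \<exists>F'\<in>adjacent_facets C A F. (F', G') \<in> Z"
  shows "sbisim C D Z"
  unfolding sbisim_iff_adjacent_facets using assms by (intro conjI allI impI ballI; simp)

lemma sbisimD:
  assumes "sbisim C D Z" "(F, G) \<in> Z"
  shows "F \<in> facets C" "G \<in> facets D" "col C ` F = col D ` G"
    and "col C ` (F \<inter> lab C p) = col D ` (G \<inter> lab D p)"
    and "\<forall>A. \<forall>F'\<in>adjacent_facets C A F. \<exists>G'\<in>adjacent_facets D A G. (F', G') \<in> Z"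
    and "\<forall>A. \<forall>G'\<in>adjacent_facets D A G. \<exists>F'\<in>adjacent_facets C A F. (F', G') \<in> Z"
  using assms unfolding sbisim_iff_adjacent_facets by blast+

lemma kbisimI:
  assumes "Z \<subseteq> worlds M \<times> worlds N"
    and "\<And>w v. (w, v) \<in> Z \<Longrightarrow> dom M w = dom N v"
    and "\<And>w v p. (w, v) \<in> Z \<Longrightarrow> val M p w = val N p v"
    and "\<And>w v A w'. (w, v) \<in> Z \<Longrightarrow> w' \<in> succs M A w \<Longrightarrow> \<exists>v'\<in>succs N A v. (w', v') \<in> Z"
    and "\<And>w v A v'. (w, v) \<in> Z \<Longrightarrow> v' \<in> succs N A v \<Longrightarrow> \<exists>w'\<in>succs M A w. (w', v') \<in> Z"
  shows "kbisim M N Z"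
  unfolding kbisim_def using assms by blast

lemma kbisimD:
  assumes "kbisim M N Z" "(w, v) \<in> Z"
  shows "w \<in> worlds M" "v \<in> worlds N" "dom M w = dom N v" "val M p w = val N p v"
    and "\<forall>A. \<forall>w'\<in>succs M A w. \<exists>v'\<in>succs N A v. (w', v') \<in> Z"
    and "\<forall>A. \<forall>v'\<in>succs N A v. \<exists>w'\<in>succs M A w. (w', v') \<in> Z"
  using assms unfolding kbisim_def by blast+

definition facet_representation ::
    "('w, 'a, 'p) kmodel \<Rightarrow> ('v, 'a, 'p) smodel \<Rightarrow> ('w \<Rightarrow> 'v set) \<Rightarrow> bool" where
  "facet_representation M S f \<longleftrightarrow>
     (\<forall>w\<in>worlds M.
        col S ` f w = dom M w \<and>
        (\<forall>p. col S ` (f w \<inter> lab S p) = val M p w) \<and>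
        (\<forall>A. adjacent_facets S A (f w) = f ` succs M A w))"

lemma facet_representationD:
  assumes "facet_representation M S f" "w \<in> worlds M"
  shows "col S ` f w = dom M w"
    and "col S ` (f w \<inter> lab S p) = val M p w"
    and "adjacent_facets S A (f w) = f ` succs M A w"
  using assms unfolding facet_representation_def by simp_all

lemma facet_representation_facet:
  assumes "facet_representation M S f" "w \<in> worlds M"
  shows "f w \<in> facets S"
proof -
  have "w \<in> succs M {} w"
    using assms(2) unfolding succs_def by simp
  then have "f w \<in> adjacent_facets S {} (f w)"
    using facet_representationD(3)[OF assms] by blast
  then show ?thesis
    unfolding adjacent_facets_def by blast
qed

lemma kbisim_imp_sbisim_image:
  assumes f: "facet_representation M S f" and g: "facet_representation N T g"
    and Z: "kbisim M N Z"
  shows "sbisim S T {(f w, g v) | w v. (w, v) \<in> Z}" (is "sbisim S T ?Z'")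
proof (rule sbisimI)
  show "?Z' \<subseteq> facets S \<times> facets T"
    using kbisimD(1,2)[OF Z] facet_representation_facet[OF f] facet_representation_facet[OF g]
    by blast
next
  fix F G
  assume "(F, G) \<in> ?Z'"
  then obtain w v where wv: "(w, v) \<in> Z" "F = f w" "G = g v"
    by blast
  note f_w = facet_representationD[OF f kbisimD(1)[OF Z wv(1)]]
    and g_v = facet_representationD[OF g kbisimD(2)[OF Z wv(1)]]
  show "col S ` F = col T ` G"
    unfolding wv(2,3) f_w g_v using kbisimD(3)[OF Z wv(1)] .
  show "col S ` (F \<inter> lab S p) = col T ` (G \<inter> lab T p)" for p
    unfolding wv(2,3) f_w g_v using kbisimD(4)[OF Z wv(1)] .
  show "\<exists>G'\<in>adjacent_facets T A G. (F', G') \<in> ?Z'" if adj: "F' \<in> adjacent_facets S A F" for A F'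
  proof -
    obtain w' where "w' \<in> succs M A w" "F' = f w'"
      using adj unfolding wv(2) f_w by blast
    moreover obtain v' where "v' \<in> succs N A v" "(w', v') \<in> Z"
      using kbisimD(5)[OF Z wv(1)] calculation(1) by blast
    ultimately show ?thesis
      unfolding wv(3) g_v by blast
  qed
  show "\<exists>F'\<in>adjacent_facets S A F. (F', G') \<in> ?Z'" if adj: "G' \<in> adjacent_facets T A G" for A G'
  proof -
    obtain v' where "v' \<in> succs N A v" "G' = g v'"
      using adj unfolding wv(3) g_v by blast
    moreover obtain w' where "w' \<in> succs M A w" "(w', v') \<in> Z"
      using kbisimD(6)[OF Z wv(1)] calculation(1) by blast
    ultimately show ?thesis
      unfolding wv(2) f_w by blast
  qed
qed

lemma sbisim_imp_kbisim_preimage: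
  assumes f: "facet_representation M S f" and g: "facet_representation N T g"
    and Z: "sbisim S T Z"
  shows "kbisim M N {(w, v) \<in> worlds M \<times> worlds N. (f w, g v) \<in> Z}" (is "kbisim M N ?Z'")
proof (rule kbisimI)
  show "?Z' \<subseteq> worlds M \<times> worlds N"
    by blast
next
  fix w v
  assume "(w, v) \<in> ?Z'"
  then have w: "w \<in> worlds M" and v: "v \<in> worlds N" and wv: "(f w, g v) \<in> Z"
    by blast+
  note f_w = facet_representationD[OF f w] and g_v = facet_representationD[OF g v]
  show "dom M w = dom N v"
    using sbisimD(3)[OF Z wv] unfolding f_w g_v .
  show "val M p w = val N p v" for p
    using sbisimD(4)[OF Z wv] unfolding f_w g_v .
  show "\<exists>v'\<in>succs N A v. (w', v') \<in> ?Z'" if succ: "w' \<in> succs M A w" for A w'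
  proof -
    have "f w' \<in> adjacent_facets S A (f w)"
      using succ unfolding f_w by blast
    then obtain v' where "v' \<in> succs N A v" "(f w', g v') \<in> Z"
      using sbisimD(5)[OF Z wv] unfolding g_v by blast
    moreover have "w' \<in> worlds M" "v' \<in> worlds N"
      using succ calculation(1) unfolding succs_def by blast+
    ultimately show ?thesis
      by blast
  qed
  show "\<exists>w'\<in>succs M A w. (w', v') \<in> ?Z'" if succ: "v' \<in> succs N A v" for A v'
  proof -
    have "g v' \<in> adjacent_facets T A (g v)"
      using succ unfolding g_v by blast
    then obtain w' where "w' \<in> succs M A w" "(f w', g v') \<in> Z"
      using sbisimD(6)[OF Z wv] unfolding f_w by blast
    moreover have "w' \<in> worlds M" "v' \<in> worlds N"
      using succ calculation(1) unfolding succs_def by blast+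
    ultimately show ?thesis
      by blast
  qed
qed

lemma kbisimilar_iff_sbisimilar:
  assumes f: "facet_representation M S f" and g: "facet_representation N T g"
    and w: "w \<in> worlds M" and v: "v \<in> worlds N"
  shows "kbisimilar M w N v \<longleftrightarrow> sbisimilar S (f w) T (g v)"
proof
  assume "kbisimilar M w N v"
  then obtain Z where "kbisim M N Z" "(w, v) \<in> Z"
    unfolding kbisimilar_def by blast
  then have "sbisim S T {(f w, g v) | w v. (w, v) \<in> Z}"
      "(f w, g v) \<in> {(f w, g v) | w v. (w, v) \<in> Z}"
    using kbisim_imp_sbisim_image[OF f g] by blast+
  then show "sbisimilar S (f w) T (g v)"
    unfolding sbisimilar_def by blast
next
  assume "sbisimilar S (f w) T (g v)"
  then obtain Z where "sbisim S T Z" "(f w, g v) \<in> Z"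
    unfolding sbisimilar_def by blast
  then have "kbisim M N {(w, v) \<in> worlds M \<times> worlds N. (f w, g v) \<in> Z}"
      "(w, v) \<in> {(w, v) \<in> worlds M \<times> worlds N. (f w, g v) \<in> Z}"
    using sbisim_imp_kbisim_preimage[OF f g] w v by simp_all
  then show "kbisimilar M w N v"
    unfolding kbisimilar_def by blast
qed

lemma worlds_LEM [simp]: "worlds (LEM C) = facets C"
  unfolding LEM_def by simp

lemma succs_LEM:
  assumes "F \<in> facets C"
  shows "succs (LEM C) A F = adjacent_facets C A F"
  using assms unfolding succs_def adjacent_facets_def LEM_def by auto

lemma facet_representation_LEM: "facet_representation (LEM C) C id"
  unfolding facet_representation_def by (simp add: succs_LEM) (simp add: LEM_def)

lemma mem_Fw_iff: "(a, X) \<in> Fw M w \<longleftrightarrow> a \<in> dom M w \<and> X = rel M a w"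
  unfolding Fw_def by blast

lemma col_SC: "col (SC M) = fst"
  unfolding SC_def by simp

lemma SC_col_Fw: "col (SC M) ` Fw M w = dom M w"
  unfolding col_SC Fw_def by force

lemma SC_col_Fw_inter_Fw:
  assumes "local_epistemic M" "u \<in> worlds M"
  shows "col (SC M) ` (Fw M w \<inter> Fw M u) = {a. u \<in> rel M a w}"
proof -
  have "a \<in> fst ` (Fw M w \<inter> Fw M u) \<longleftrightarrow> u \<in> rel M a w" for a
  proof
    assume "a \<in> fst ` (Fw M w \<inter> Fw M u)"
    then have "a \<in> dom M u" "rel M a u = rel M a w"
      unfolding Fw_def by auto
    then show "u \<in> rel M a w"
      using local_epistemic_rel_refl[OF assms] by metis
  next
    assume u: "u \<in> rel M a w"
    then have "a \<in> dom M w" "a \<in> dom M u" "rel M a u = rel M a w"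
      using kripke_model_rel(3)[OF local_epistemic_kripke_model[OF assms(1)]]
        local_epistemic_dom_rel[OF assms(1)] local_epistemic_rel_class[OF assms(1)] by blast+
    then have "(a, rel M a w) \<in> Fw M w \<inter> Fw M u"
      by (simp add: mem_Fw_iff)
    then show "a \<in> fst ` (Fw M w \<inter> Fw M u)"
      by force
  qed
  then show ?thesis
    unfolding col_SC by blast
qed

lemma SC_col_Fw_inter_lab:
  assumes "local_epistemic M" "w \<in> worlds M"
  shows "col (SC M) ` (Fw M w \<inter> lab (SC M) p) = val M p w"
proof -
  have "a \<in> fst ` (Fw M w \<inter> lab (SC M) p) \<longleftrightarrow> a \<in> val M p w" for a
  proof
    assume "a \<in> fst ` (Fw M w \<inter> lab (SC M) p)"
    then obtain u where u: "u \<in> worlds M" "a \<in> val M p u" "a \<in> dom M w" "rel M a u = rel M a w"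
      unfolding SC_def Fw_def by auto
    then have "w \<in> rel M a u"
      using local_epistemic_rel_refl[OF assms] by metis
    then show "a \<in> val M p w"
      using local_epistemic_val_rel[OF assms(1)] u(2) by blast
  next
    assume "a \<in> val M p w"
    moreover have "val M p w \<subseteq> dom M w"
      using assms local_epistemic_kripke_model unfolding kripke_model_def by blast
    ultimately have "(a, rel M a w) \<in> Fw M w \<inter> lab (SC M) p"
      using assms(2) unfolding SC_def Fw_def by auto
    then show "a \<in> fst ` (Fw M w \<inter> lab (SC M) p)"
      by force
  qed
  then show ?thesis
    unfolding col_SC by blast
qed

lemma Fw_subset_imp_eq:
  assumes "local_epistemic M" "w \<in> worlds M" "u \<in> worlds M" "Fw M w \<subseteq> Fw M u"
  shows "Fw M u = Fw M w"
proof -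
  have same_class: "a \<in> dom M u \<and> rel M a u = rel M a w" if "a \<in> dom M w" for a
    using that assms(4) unfolding Fw_def by blast
  then have "\<forall>a\<in>dom M w. u \<in> rel M a w"
    using local_epistemic_rel_refl[OF assms(1,3)] by metis
  then have "dom M u \<subseteq> dom M w"
    using local_epistemic_dom_subset[OF assms(1-3)] by blast
  then have "Fw M u \<subseteq> Fw M w"
    using same_class unfolding Fw_def by force
  with assms(4) show ?thesis
    by blast
qed

lemma SC_facets:
  assumes "local_epistemic M"
  shows "facets (SC M) = Fw M ` worlds M"
proof -
  have Fw_face: "Fw M w \<in> faces (SC M)" if "w \<in> worlds M" for w
  proof -
    have "dom M w \<noteq> {}"
      using that assms local_epistemic_kripke_model unfolding kripke_model_def by blast
    then show ?thesis
      using that unfolding SC_def Fw_def by auto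
  qed
  have faces: "X \<in> faces (SC M) \<longleftrightarrow> X \<noteq> {} \<and> (\<exists>w\<in>worlds M. X \<subseteq> Fw M w)" for X
    unfolding SC_def by simp
  show ?thesis
  proof (intro equalityI subsetI)
    fix X
    assume X: "X \<in> facets (SC M)"
    then obtain w where "w \<in> worlds M" "X \<subseteq> Fw M w"
      unfolding facets_def faces by blast
    with X Fw_face show "X \<in> Fw M ` worlds M"
      unfolding facets_def by blast
  next
    fix X
    assume "X \<in> Fw M ` worlds M"
    then obtain w where w: "w \<in> worlds M" "X = Fw M w"
      by blast
    have "Y = Fw M w" if "Y \<in> faces (SC M)" "Fw M w \<subseteq> Y" for Y
      using that Fw_subset_imp_eq[OF assms w(1)] unfolding faces by blast
    with w Fw_face show "X \<in> facets (SC M)"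
      unfolding facets_def by blast
  qed
qed

lemma SC_adjacent_facets_Fw:
  assumes "local_epistemic M" "w \<in> worlds M"
  shows "adjacent_facets (SC M) A (Fw M w) = Fw M ` succs M A w"
proof -
  have "A \<subseteq> col (SC M) ` (Fw M w \<inter> Fw M u) \<longleftrightarrow> (\<forall>a\<in>A. u \<in> rel M a w)" if "u \<in> worlds M" for u
    using SC_col_Fw_inter_Fw[OF assms(1) that] by blast
  then show ?thesis
    unfolding adjacent_facets_def SC_facets[OF assms(1)] succs_def by blast
qed

lemma facet_representation_SC:
  assumes "local_epistemic M"
  shows "facet_representation M (SC M) (Fw M)"
  unfolding facet_representation_def
  by (simp add: SC_col_Fw SC_col_Fw_inter_lab[OF assms] SC_adjacent_facets_Fw[OF assms])

theorem proposition4: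
  fixes C :: "('v, 'a::finite, 'p::countable) smodel"
    and D :: "('u, 'a, 'p) smodel"
    and M :: "('w, 'a, 'p) kmodel"
    and N :: "('x, 'a, 'p) kmodel"
  assumes "simplicial_model C" and "simplicial_model D"
    and "F \<in> facets C" and "G \<in> facets D"
    and "local_epistemic M" and "local_epistemic N"
    and "w \<in> worlds M" and "v \<in> worlds N"
  shows "(sbisimilar C F D G \<longleftrightarrow> kbisimilar (LEM C) F (LEM D) G) \<and>
         (kbisimilar M w N v \<longleftrightarrow> sbisimilar (SC M) (Fw M w) (SC N) (Fw N v))"
proof
  have "kbisimilar (LEM C) F (LEM D) G \<longleftrightarrow> sbisimilar C (id F) D (id G)"
    using kbisimilar_iff_sbisimilar[OF facet_representation_LEM facet_representation_LEM] assms(3,4)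
    by simp
  then show "sbisimilar C F D G \<longleftrightarrow> kbisimilar (LEM C) F (LEM D) G"
    by simp
  show "kbisimilar M w N v \<longleftrightarrow> sbisimilar (SC M) (Fw M w) (SC N) (Fw N v)"
    using kbisimilar_iff_sbisimilar[OF facet_representation_SC facet_representation_SC] assms(5-8) .
qed

end
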